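(* Let $D\ge2$ and $k\ge2$. There exist constants $c,C_k>0$ depending only on $D$ and $k$ such that: let $0<\varepsilon<c$ and $E\subset\mathbb R^D$ with $2\leq\mathrm{card}(E)\leq k$. Then there exist $\tau$ with $\exp(-C_k/\varepsilon)\mathrm{diam}(E)\leq\tau\leq\exp(-1/\varepsilon)\mathrm{diam}(E)$ and a partition of $E$ into subsets $E_\nu$ ($\nu=1,\dots,\nu_{\max}$) such that $\mathrm{card}(E_\nu)\leq k-1$ for all $\nu$, $\mathrm{diam}(E_\nu)\leq\exp(-5/\varepsilon)\tau$ for all $\nu$, and $\mathrm{dist}(E_\nu,E_{\nu'})\geq\tau$ for all $\nu\neq\nu'$. *)

theory Defs
  imports "HOL-Analysis.Analysis"
begin

definition is_partition_of :: "'a set set \<Rightarrow> 'a set \<Rightarrow> bool" where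
  "is_partition_of P E \<longleftrightarrow> \<Union>P = E \<and> (\<forall>F\<in>P. F \<noteq> {}) \<and>
     (\<forall>F\<in>P. \<forall>G\<in>P. F \<noteq> G \<longrightarrow> F \<inter> G = {})"

end

theory Submission
  imports Defs
begin

text \<open>
  Put \<open>\<tau>\<^sub>j = exp (-(1 + 6 j)/\<epsilon>) diam E\<close>. The at most \<open>k\<^sup>2\<close> pairwise distances in \<open>E\<close>
  cannot meet all of the \<open>k\<^sup>2 + 1\<close> disjoint windows \<open>[\<tau>\<^sub>j\<^sub>+\<^sub>1, \<tau>\<^sub>j)\<close>, \<open>j \<le> k\<^sup>2\<close>. At a scale
  \<open>\<tau> = \<tau>\<^sub>j\<close> whose window is empty, every distance below \<open>\<tau>\<close> is even below \<open>\<tau>\<^sub>j\<^sub>+\<^sub>1 < \<tau>/2\<close>,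
  so "closer than \<open>\<tau>\<close>" is an equivalence relation on \<open>E\<close>. Its classes have diameter at
  most \<open>\<tau>\<^sub>j\<^sub>+\<^sub>1 = exp (-6/\<epsilon>) \<tau>\<close>, are \<open>\<tau>\<close>-separated, and none is all of \<open>E\<close> since
  \<open>\<tau> < diam E\<close>. The argument works in any metric space.
\<close>

lemma finite_set_misses_some_window:
  fixes S :: "real set" and t :: "nat \<Rightarrow> real"
  assumes "finite S" and "card S \<le> K" and dec: "\<And>j. t (Suc j) < t j"
  shows "\<exists>j\<le>K. \<forall>s\<in>S. \<not> (t (Suc j) \<le> s \<and> s < t j)"
proof (rule ccontr)
  assume "\<not> ?thesis"
  then obtain f where f: "\<And>j. j \<le> K \<Longrightarrow> f j \<in> S \<and> t (Suc j) \<le> f j \<and> f j < t j"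
    by (metis not_le)
  have "f i \<noteq> f j" if "i \<le> K" "j \<le> K" "i < j" for i j
  proof -
    have "t j \<le> t (Suc i)"
      using decseqD[OF decseq_SucI, of t "Suc i" j] dec \<open>i < j\<close> by (simp add: less_imp_le)
    thus ?thesis using f[OF \<open>i \<le> K\<close>] f[OF \<open>j \<le> K\<close>] by auto
  qed
  hence "inj_on f {..K}"
    by (metis atMost_iff inj_onI linorder_neqE_nat)
  moreover have "f ` {..K} \<subseteq> S" using f by auto
  ultimately have "card {..K} \<le> card S" using card_inj_on_le \<open>finite S\<close> by blast
  thus False using \<open>card S \<le> K\<close> by simp
qed

lemma partition_at_distance_gap:
  fixes E :: "'a::metric_space set"
  assumes "0 < \<tau>" and "2 * \<delta> < \<tau>"
    and gap: "\<And>p q. p \<in> E \<Longrightarrow> q \<in> E \<Longrightarrow> dist p q < \<tau> \<Longrightarrow> dist p q \<le> \<delta>"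
  shows "\<exists>P. is_partition_of P E \<and> (\<forall>F\<in>P. diameter F \<le> \<delta>) \<and>
           (\<forall>F\<in>P. \<forall>G\<in>P. F \<noteq> G \<longrightarrow> \<tau> \<le> setdist F G)"
proof -
  have close_trans: "dist p r < \<tau>"
    if "p \<in> E" "q \<in> E" "r \<in> E" "dist p q < \<tau>" "dist q r < \<tau>" for p q r
    using dist_triangle[of p r q] gap[of p q] gap[of q r] that assms(1,2) by linarith
  define B where "B p = {q \<in> E. dist p q < \<tau>}" for p
  have B_self: "p \<in> B p" if "p \<in> E" for p
    using that \<open>0 < \<tau>\<close> by (simp add: B_def)
  have B_eq: "B p = B q" if "p \<in> E" "q \<in> E" "dist p q < \<tau>" for p q
    using that close_trans[of q p] close_trans[of p q] by (auto simp: B_def dist_commute)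
  have B_disjoint: "B p \<inter> B q = {}" if "p \<in> E" "q \<in> E" "B p \<noteq> B q" for p q
    using that B_eq[of p] B_eq[of q] by (auto simp: B_def)
  have "is_partition_of (B ` E) E"
    unfolding is_partition_of_def using B_self B_disjoint by (auto simp: B_def)
  moreover have "diameter (B p) \<le> \<delta>" if "p \<in> E" for p
  proof -
    have "dist u v \<le> \<delta>" if "u \<in> B p" "v \<in> B p" for u v
      using that close_trans[of u p v] gap[of u v] \<open>p \<in> E\<close> by (simp add: B_def dist_commute)
    then show ?thesis
      unfolding diameter_def using B_self[OF that] by (auto intro!: cSUP_least)
  qed
  moreover have "\<tau> \<le> setdist (B p) (B q)" if "p \<in> E" "q \<in> E" "B p \<noteq> B q" for p q
  proof (rule le_setdistI)
    fix u v assume "u \<in> B p" "v \<in> B q"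
    show "\<tau> \<le> dist u v"
    proof (rule ccontr)
      assume "\<not> \<tau> \<le> dist u v"
      with \<open>u \<in> B p\<close> \<open>v \<in> B q\<close> have "B p = B u" "B u = B v" "B v = B q"
        using that B_eq[of p u] B_eq[of u v] B_eq[of q v] by (auto simp: B_def)
      with \<open>B p \<noteq> B q\<close> show False by simp
    qed
  qed (use B_self that in auto)
  ultimately show ?thesis by blast
qed

lemma geometric_scale_missing_finite_set:
  fixes S :: "real set"
  assumes "finite S" and "card S \<le> K" and "0 < r" "r < 1" and "0 < \<tau>\<^sub>0"
  obtains j where "j \<le> K" and "\<And>s. s \<in> S \<Longrightarrow> s < r ^ j * \<tau>\<^sub>0 \<Longrightarrow> s < r ^ Suc j * \<tau>\<^sub>0"
proof -
  have "r ^ Suc j * \<tau>\<^sub>0 < r ^ j * \<tau>\<^sub>0" for j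
    using assms(3-5) by (simp add: mult_strict_right_mono)
  then obtain j where "j \<le> K" "\<forall>s\<in>S. \<not> (r ^ Suc j * \<tau>\<^sub>0 \<le> s \<and> s < r ^ j * \<tau>\<^sub>0)"
    using finite_set_misses_some_window[of S K "\<lambda>j. r ^ j * \<tau>\<^sub>0"] assms(1,2) by blast
  then show ?thesis using that by (meson not_le)
qed

lemma diameter_pos_if_card_ge_2:
  fixes E :: "'a::metric_space set"
  assumes "finite E" and "2 \<le> card E"
  shows "0 < diameter E"
proof -
  obtain x y where "x \<in> E" "y \<in> E" "x \<noteq> y"
  proof -
    have "\<not> card E \<le> Suc 0" using \<open>2 \<le> card E\<close> by simp
    then show ?thesis using that card_le_Suc0_iff_eq[OF \<open>finite E\<close>] by blast
  qed
  then show ?thesis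
    using diameter_bounded_bound[OF finite_imp_bounded[OF \<open>finite E\<close>], of x y]
      dist_pos_lt[of x y] by linarith
qed

lemma separated_partition_at_geometric_scale:
  fixes E :: "'a::metric_space set"
  assumes "finite E" and "card E \<le> k" and "0 < r" "2 * r < 1"
    and "0 < \<tau>\<^sub>0" "\<tau>\<^sub>0 < diameter E"
  obtains j P where "j \<le> k\<^sup>2" and "is_partition_of P E" and "\<forall>F\<in>P. card F < card E"
    and "\<forall>F\<in>P. diameter F \<le> r ^ Suc j * \<tau>\<^sub>0"
    and "\<forall>F\<in>P. \<forall>G\<in>P. F \<noteq> G \<longrightarrow> r ^ j * \<tau>\<^sub>0 \<le> setdist F G"
proof -
  define S where "S = case_prod dist ` (E \<times> E)"
  have "card S \<le> card E ^ 2"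
    using card_image_le[of "E \<times> E" "case_prod dist"] \<open>finite E\<close>
    by (simp add: S_def card_cartesian_product power2_eq_square)
  also have "\<dots> \<le> k\<^sup>2" using \<open>card E \<le> k\<close> by (simp add: power_mono)
  finally obtain j where "j \<le> k\<^sup>2"
    and gap: "\<And>s. s \<in> S \<Longrightarrow> s < r ^ j * \<tau>\<^sub>0 \<Longrightarrow> s < r ^ Suc j * \<tau>\<^sub>0"
    using geometric_scale_missing_finite_set[of S "k\<^sup>2" r \<tau>\<^sub>0] assms(1,3-5) by (auto simp: S_def)
  have "r ^ Suc j * \<tau>\<^sub>0 < r ^ j * \<tau>\<^sub>0 / 2"
    using assms(3-5) by (simp add: mult_strict_right_mono)
  moreover have "dist p q \<le> r ^ Suc j * \<tau>\<^sub>0"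
    if "p \<in> E" "q \<in> E" "dist p q < r ^ j * \<tau>\<^sub>0" for p q
    using gap[of "dist p q"] that by (force simp: S_def)
  ultimately obtain P where P: "is_partition_of P E" "\<forall>F\<in>P. diameter F \<le> r ^ Suc j * \<tau>\<^sub>0"
      "\<forall>F\<in>P. \<forall>G\<in>P. F \<noteq> G \<longrightarrow> r ^ j * \<tau>\<^sub>0 \<le> setdist F G"
    using partition_at_distance_gap[of "r ^ j * \<tau>\<^sub>0" "r ^ Suc j * \<tau>\<^sub>0" E] assms(3,5) by auto
  have "card F < card E" if "F \<in> P" for F
  proof -
    have "r ^ Suc j \<le> 1"
      using assms(3,4) by (intro power_le_one) auto
    then have "r ^ Suc j * \<tau>\<^sub>0 \<le> \<tau>\<^sub>0"
      using \<open>0 < \<tau>\<^sub>0\<close> by (simp add: mult_le_cancel_right1)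
    then have "F \<noteq> E" using P(2) that \<open>\<tau>\<^sub>0 < diameter E\<close> by fastforce
    moreover have "F \<subseteq> E" using P(1) that by (auto simp: is_partition_of_def)
    ultimately show ?thesis using \<open>finite E\<close> by (simp add: psubset_card_mono)
  qed
  then show ?thesis using that[OF \<open>j \<le> k\<^sup>2\<close> P(1) _ P(2,3)] by blast
qed

lemma exp_scale_power:
  fixes \<epsilon> :: real
  shows "exp (- 6 / \<epsilon>) ^ j * (exp (- 1 / \<epsilon>) * d) = exp (- (1 + 6 * real j) / \<epsilon>) * d"
proof -
  have "exp (- 6 / \<epsilon>) ^ j = exp (real j * (- 6 / \<epsilon>))"
    by (rule exp_of_nat_mult[symmetric])
  also have "\<dots> * exp (- 1 / \<epsilon>) = exp (- (1 + 6 * real j) / \<epsilon>)"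
    by (cases "\<epsilon> = 0") (simp_all add: exp_add[symmetric] field_simps)
  finally show ?thesis by (simp add: mult.assoc)
qed

lemma two_exp_neg_six_div_less_one:
  fixes \<epsilon> :: real
  assumes "0 < \<epsilon>" "\<epsilon> < 1"
  shows "2 * exp (- 6 / \<epsilon>) < 1"
proof -
  have "1 < 6 / \<epsilon>" using assms by (simp add: less_divide_eq)
  then have "2 < exp (6 / \<epsilon>)"
    using exp_ge_add_one_self[of "6 / \<epsilon>"] by linarith
  then have "2 * exp (- 6 / \<epsilon>) < exp (6 / \<epsilon>) * exp (- 6 / \<epsilon>)"
    by simp
  also have "\<dots> = 1" by (simp add: exp_add[symmetric])
  finally show ?thesis .
qed

lemma separated_partition_at_exponential_scale:
  fixes E :: "'a::metric_space set"
  assumes "0 < \<epsilon>" "\<epsilon> < 1" and "finite E" "2 \<le> card E" "card E \<le> k"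
  obtains \<tau> P where "exp (- (1 + 6 * real (k\<^sup>2)) / \<epsilon>) * diameter E \<le> \<tau>"
    and "\<tau> \<le> exp (- 1 / \<epsilon>) * diameter E"
    and "is_partition_of P E" and "\<forall>F\<in>P. card F < card E"
    and "\<forall>F\<in>P. diameter F \<le> exp (- 6 / \<epsilon>) * \<tau>"
    and "\<forall>F\<in>P. \<forall>G\<in>P. F \<noteq> G \<longrightarrow> \<tau> \<le> setdist F G"
proof -
  define d where "d = diameter E"
  have "0 < d" unfolding d_def using diameter_pos_if_card_ge_2 assms(3,4) .
  moreover have "exp (- 1 / \<epsilon>) < 1" using \<open>0 < \<epsilon>\<close> by simp
  ultimately have "exp (- 1 / \<epsilon>) * d < d" by simp
  then obtain j P where j: "j \<le> k\<^sup>2" and P: "is_partition_of P E" "\<forall>F\<in>P. card F < card E"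
    "\<forall>F\<in>P. diameter F \<le> exp (- 6 / \<epsilon>) ^ Suc j * (exp (- 1 / \<epsilon>) * d)"
    "\<forall>F\<in>P. \<forall>G\<in>P. F \<noteq> G \<longrightarrow> exp (- 6 / \<epsilon>) ^ j * (exp (- 1 / \<epsilon>) * d) \<le> setdist F G"
    using separated_partition_at_geometric_scale[of E k "exp (- 6 / \<epsilon>)" "exp (- 1 / \<epsilon>) * d"]
      two_exp_neg_six_div_less_one[OF assms(1,2)] assms(3,5) \<open>0 < d\<close>
    unfolding d_def by auto
  define \<tau> where "\<tau> = exp (- (1 + 6 * real j) / \<epsilon>) * d"
  have \<tau>_eq: "exp (- 6 / \<epsilon>) ^ j * (exp (- 1 / \<epsilon>) * d) = \<tau>"
    unfolding \<tau>_def by (rule exp_scale_power)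
  have \<tau>_Suc_eq: "exp (- 6 / \<epsilon>) ^ Suc j * (exp (- 1 / \<epsilon>) * d) = exp (- 6 / \<epsilon>) * \<tau>"
    by (simp only: power_Suc mult.assoc \<tau>_eq)
  show ?thesis
  proof (rule that[of \<tau> P])
    have "exp (- (1 + 6 * real (k\<^sup>2)) / \<epsilon>) \<le> exp (- (1 + 6 * real j) / \<epsilon>)"
      using j \<open>0 < \<epsilon>\<close> by (simp add: divide_le_cancel)
    then show "exp (- (1 + 6 * real (k\<^sup>2)) / \<epsilon>) * diameter E \<le> \<tau>"
      unfolding \<tau>_def d_def[symmetric] using \<open>0 < d\<close> by (intro mult_right_mono) auto
    have "exp (- (1 + 6 * real j) / \<epsilon>) \<le> exp (- 1 / \<epsilon>)"
      using \<open>0 < \<epsilon>\<close> by (simp only: exp_le_cancel_iff) (intro divide_right_mono; simp)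
    then show "\<tau> \<le> exp (- 1 / \<epsilon>) * diameter E"
      unfolding \<tau>_def d_def[symmetric] using \<open>0 < d\<close> by (intro mult_right_mono) auto
    show "\<forall>F\<in>P. diameter F \<le> exp (- 6 / \<epsilon>) * \<tau>" using P(3) unfolding \<tau>_Suc_eq .
    show "\<forall>F\<in>P. \<forall>G\<in>P. F \<noteq> G \<longrightarrow> \<tau> \<le> setdist F G" using P(4) unfolding \<tau>_eq .
  qed (use P in auto)
qed

theorem lemma2p2:
  assumes "DIM('a::euclidean_space) \<ge> 2"
  shows "\<forall>k::nat. k \<ge> 2 \<longrightarrow>
    (\<exists>c::real. \<exists>Ck::real. c > 0 \<and> Ck > 0 \<and>
      (\<forall>(\<epsilon>::real) (E::'a set).
         0 < \<epsilon> \<and> \<epsilon> < c \<and> finite E \<and> 2 \<le> card E \<and> card E \<le> k \<longrightarrow>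
         (\<exists>(\<tau>::real) (P::'a set set).
            exp (- Ck / \<epsilon>) * diameter E \<le> \<tau> \<and> \<tau> \<le> exp (- 1 / \<epsilon>) * diameter E \<and>
            is_partition_of P E \<and>
            (\<forall>F\<in>P. card F \<le> k - 1) \<and>
            (\<forall>F\<in>P. diameter F \<le> exp (- 5 / \<epsilon>) * \<tau>) \<and>
            (\<forall>F\<in>P. \<forall>G\<in>P. F \<noteq> G \<longrightarrow> setdist F G \<ge> \<tau>))))"
proof -
  have partition: "\<exists>\<tau> P. exp (- (1 + 6 * real (k\<^sup>2)) / \<epsilon>) * diameter E \<le> \<tau> \<and>
      \<tau> \<le> exp (- 1 / \<epsilon>) * diameter E \<and> is_partition_of P E \<and>
      (\<forall>F\<in>P. card F \<le> k - 1) \<and> (\<forall>F\<in>P. diameter F \<le> exp (- 5 / \<epsilon>) * \<tau>) \<and>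
      (\<forall>F\<in>P. \<forall>G\<in>P. F \<noteq> G \<longrightarrow> \<tau> \<le> setdist F G)"
    if asm: "0 < \<epsilon>" "\<epsilon> < 1" "finite E" "2 \<le> card E" "card E \<le> k"
    for k \<epsilon> and E :: "'a set"
  proof -
    obtain \<tau> P where \<tau>: "exp (- (1 + 6 * real (k\<^sup>2)) / \<epsilon>) * diameter E \<le> \<tau>"
      "\<tau> \<le> exp (- 1 / \<epsilon>) * diameter E" and P: "is_partition_of P E" "\<forall>F\<in>P. card F < card E"
      "\<forall>F\<in>P. diameter F \<le> exp (- 6 / \<epsilon>) * \<tau>" "\<forall>F\<in>P. \<forall>G\<in>P. F \<noteq> G \<longrightarrow> \<tau> \<le> setdist F G"
      using separated_partition_at_exponential_scale[OF asm] by blast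
    have "0 \<le> exp (- (1 + 6 * real (k\<^sup>2)) / \<epsilon>) * diameter E"
      using diameter_pos_if_card_ge_2[OF asm(3,4)] by simp
    then have "exp (- 6 / \<epsilon>) * \<tau> \<le> exp (- 5 / \<epsilon>) * \<tau>"
      using \<tau>(1) \<open>0 < \<epsilon>\<close> by (intro mult_right_mono) (simp_all add: divide_le_cancel)
    then have "\<forall>F\<in>P. diameter F \<le> exp (- 5 / \<epsilon>) * \<tau>"
      using P(3) by (meson order_trans)
    moreover have "\<forall>F\<in>P. card F \<le> k - 1"
      using P(2) \<open>card E \<le> k\<close> by fastforce
    ultimately show ?thesis using \<tau> P(1,4) by blast
  qed
  have Ck_pos: "(0::real) < 1 + 6 * real (k\<^sup>2)" for k :: nat
    by (simp add: add_pos_nonneg)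
  show ?thesis
    apply (intro allI impI)
    subgoal for k
      by (rule exI[of _ 1], rule exI[of _ "1 + 6 * real (k\<^sup>2)"])
        (use partition[of _ _ k] Ck_pos[of k] zero_less_one in blast)
    done
qed

end
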